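(* Let $q$ be a prime power and $k\ge 1$ an integer. A simple graph $G$ satisfies $\operatorname{mr}(\mathbb{F}_q,G)\le k$ (i.e. $G\in\mathcal{G}_k(\mathbb{F}_q)$) if and only if $G$ is a blowup of some graph of the form $H\cup K_1$ with $H\in\mathfrak{g}_k(\mathbb{F}_q)$, where $K_1$ denotes a single isolated nonlooped vertex and $\cup$ is disjoint union.
   Context: Graphs may have loops but no multiple edges; a simple graph has no loops. For a field $F$ and a simple graph $G$ on vertices $\{1,\dots,n\}$, $S(F,G)$ is the set of symmetric $n\times n$ matrices $A$ over $F$ with $a_{ij}\neq 0$ for $i\ne j$ iff $ij$ is an edge of $G$ (diagonal entries unrestricted); $\operatorname{mr}(F,G)=\min\{\operatorname{rank}A: A\in S(F,G)\}$ and $\mathcal{G}_k(F)=\{G:\operatorname{mr}(F,G)\le k\}$. For a symmetric $n\times n$ matrix $A$, the looped graph corresponding to $A$, $\Gamma(A)$, has vertex set $\{1,\dots,n\}$, an edge $ij$ ($i\neq j$) iff $a_{ij}\neq0$, and a loop at $i$ iff $a_{ii}\ne 0$. Definition of $\mathfrak{g}_k(\mathbb{F}_q)$: let $x_1,\dots,x_m$ be representatives of the classes of nonzero vectors of $\mathbb{F}_q^k$ under the relation $x\sim cx$ ($c\in\mathbb{F}_q$, $c\neq0$), and let $U=[x_1\ \cdots\ x_m]$ be the $k\times m$ matrix with these columns; $\mathfrak{g}_k(\mathbb{F}_q)$ is the set of isomorphism classes of looped graphs $\Gamma(U^tBU)$ as $B$ ranges over the invertible symmetric $k\times k$ matrices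 over $\mathbb{F}_q$ (equivalently over a set of representatives of congruence classes $B\mapsto C^tBC$, $C$ invertible). A blowup of a looped graph $G$ with vertices $v_1,\dots,v_n$ is a simple graph obtained by replacing each nonlooped vertex $v_i$ by a (possibly empty) independent set $V_i$, each looped vertex $v_i$ by a (possibly empty) clique $V_i$, and each edge $v_iv_j$ ($i\ne j$) by all edges $xy$ with $x\in V_i$, $y\in V_j$. *)

theory Defs
  imports "Jordan_Normal_Form.DL_Rank"
begin

text \<open>Simple graphs on the vertex set {0..<n} (0-based instead of 1-based),
  given by a symmetric irreflexive adjacency relation E.\<close>
definition simple_graph :: "nat \<Rightarrow> (nat \<Rightarrow> nat \<Rightarrow> bool) \<Rightarrow> bool" where
  "simple_graph n E \<longleftrightarrow> (\<forall>i j. E i j \<longrightarrow> i < n \<and> j < n) \<and> (\<forall>i j. E i j \<longrightarrow> E j i) \<and> (\<forall>i. \<not> E i i)"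

definition mat_rank :: "'a::field mat \<Rightarrow> nat" where
  "mat_rank A = vec_space.rank (dim_row A) A"

definition S_set :: "'a::field itself \<Rightarrow> nat \<Rightarrow> (nat \<Rightarrow> nat \<Rightarrow> bool) \<Rightarrow> 'a mat set" where
  "S_set _ n E = {A. A \<in> carrier_mat n n \<and> transpose_mat A = A \<and>
      (\<forall>i<n. \<forall>j<n. i \<noteq> j \<longrightarrow> (A $$ (i, j) \<noteq> 0 \<longleftrightarrow> E i j))}"

definition mr :: "'a::field itself \<Rightarrow> nat \<Rightarrow> (nat \<Rightarrow> nat \<Rightarrow> bool) \<Rightarrow> nat" where
  "mr T n E = (LEAST r. \<exists>A \<in> S_set T n E. mat_rank A = r)"

text \<open>Looped graphs: a pair (m, L) with vertex set {0..<m}, symmetric adjacency L;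
  a loop at i means L i i.\<close>
type_synonym looped_graph = "nat \<times> (nat \<Rightarrow> nat \<Rightarrow> bool)"

definition Gamma :: "'a::field mat \<Rightarrow> looped_graph" where
  "Gamma A = (dim_row A, (\<lambda>i j. i < dim_row A \<and> j < dim_row A \<and> A $$ (i, j) \<noteq> 0))"

definition looped_iso :: "looped_graph \<Rightarrow> looped_graph \<Rightarrow> bool" where
  "looped_iso G H \<longleftrightarrow> (\<exists>f. bij_betw f {..<fst G} {..<fst H} \<and>
      (\<forall>i<fst G. \<forall>j<fst G. snd G i j \<longleftrightarrow> snd H (f i) (f j)))"

definition proj_reps :: "'a::field itself \<Rightarrow> nat \<Rightarrow> 'a vec list \<Rightarrow> bool" where
  "proj_reps _ k xs \<longleftrightarrow>
     (\<forall>x \<in> set xs. x \<in> carrier_vec k \<and> x \<noteq> 0\<^sub>v k) \<and>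
     (\<forall>i < length xs. \<forall>j < length xs. i \<noteq> j \<longrightarrow> (\<nexists>c. c \<noteq> 0 \<and> xs ! j = c \<cdot>\<^sub>v (xs ! i))) \<and>
     (\<forall>v \<in> carrier_vec k. v \<noteq> 0\<^sub>v k \<longrightarrow> (\<exists>x \<in> set xs. \<exists>c. c \<noteq> 0 \<and> v = c \<cdot>\<^sub>v x))"

text \<open>Membership (up to isomorphism) in the set g_k(F): H is isomorphic to
  Gamma(U^t B U) for B invertible symmetric k x k.\<close>
definition in_gk :: "'a::field itself \<Rightarrow> nat \<Rightarrow> looped_graph \<Rightarrow> bool" where
  "in_gk T k H \<longleftrightarrow> (\<exists>(xs :: 'a vec list) (B :: 'a mat). proj_reps T k xs \<and>
      B \<in> carrier_mat k k \<and> transpose_mat B = B \<and> invertible_mat B \<and>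
      looped_iso (Gamma (transpose_mat (mat_of_cols k xs) * B * mat_of_cols k xs)) H)"

definition add_K1 :: "looped_graph \<Rightarrow> looped_graph" where
  "add_K1 H = (Suc (fst H), (\<lambda>i j. i < fst H \<and> j < fst H \<and> snd H i j))"

text \<open>Simple graph (n,E) is a blowup of looped graph (m,L): vertex x of G lies in the
  part V_(f x); the parts V_i are possibly empty; V_i is a clique if i is looped and an
  independent set otherwise; parts of adjacent vertices are completely joined, others
  not joined.\<close>
definition is_blowup :: "nat \<Rightarrow> (nat \<Rightarrow> nat \<Rightarrow> bool) \<Rightarrow> looped_graph \<Rightarrow> bool" where
  "is_blowup n E H \<longleftrightarrow> (\<exists>f. (\<forall>x<n. f x < fst H) \<and>
      (\<forall>x<n. \<forall>y<n. x \<noteq> y \<longrightarrow> (E x y \<longleftrightarrow> snd H (f x) (f y))))"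

end

theory Submission
  imports Defs
begin

text \<open>
  Over any field, a symmetric matrix of rank at most k can be written as
  W^T B W with B an invertible symmetric k \<times> k matrix and W a k \<times> n matrix, and conversely
  every such product has rank at most k.  The off-diagonal entry (x, y) of W^T B W is the
  value of the bilinear form of B on the columns w_x, w_y of W.  Over a finite field
  every column is either zero or a nonzero multiple of exactly one representative u_a
  of the projective points of F^k, and scaling does not change whether the form vanishes;
  hence the zero pattern of W^T B W is that of U^T B U (the looped graph in g_k), blown up
  along the map x \<mapsto> a, with zero columns sent to an extra isolated vertex K_1.
\<close>

lemma finite_carrier_vec: "finite (carrier_vec k :: 'a::finite vec set)"
proof -
  have "carrier_vec k \<subseteq> (\<lambda>f. vec k f) ` ({0..<k} \<rightarrow>\<^sub>E (UNIV :: 'a set))"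
  proof
    fix v :: "'a vec" assume "v \<in> carrier_vec k"
    then have "v = vec k (restrict (($) v) {0..<k})" by (intro eq_vecI) auto
    moreover have "restrict (($) v) {0..<k} \<in> {0..<k} \<rightarrow>\<^sub>E (UNIV :: 'a set)" by simp
    ultimately show "v \<in> (\<lambda>f. vec k f) ` ({0..<k} \<rightarrow>\<^sub>E UNIV)" by blast
  qed
  then show ?thesis by (rule finite_subset) (intro finite_imageI finite_PiE; simp)
qed

lemma invertible_mat_if_det_nonzero:
  fixes D :: "'a::field mat"
  assumes D: "D \<in> carrier_mat n n" and det: "det D \<noteq> 0"
  shows "invertible_mat D"
proof -
  from det_non_zero_imp_unit[OF D det, of "()"]
  obtain B where "B \<in> carrier_mat n n" "B * D = 1\<^sub>m n" "D * B = 1\<^sub>m n"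
    unfolding Units_def ring_mat_simps by auto
  then show ?thesis unfolding invertible_mat_def inverts_mat_def using D by auto
qed

lemma rank_sum_of_rank_one_le:
  fixes f g :: "nat \<Rightarrow> nat \<Rightarrow> 'a::field"
  shows "vec_space.rank n (mat n n' (\<lambda>(i, j). \<Sum>t<m. f i t * g t j)) \<le> m"
proof (induction m)
  case 0
  have zero: "mat n n' (\<lambda>(i, j). \<Sum>t<0. f i t * g t j) = (0\<^sub>m n n' :: 'a mat)"
    by (rule eq_matI) auto
  show ?case unfolding zero vec_space.rank_0I by simp
next
  case (Suc m)
  have split: "mat n n' (\<lambda>(i, j). \<Sum>t<Suc m. f i t * g t j)
      = mat n n' (\<lambda>(i, j). \<Sum>t<m. f i t * g t j) + mat n n' (\<lambda>(i, j). f i m * g m j)"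
    by (rule eq_matI) auto
  have "vec_space.rank n (mat n n' (\<lambda>(i, j). f i m * g m j)) \<le> 1"
    by (rule vec_space.rank_le_1_product_entries[of _ n n' "\<lambda>i. f i m" "\<lambda>j. g m j"]) auto
  moreover have "vec_space.rank n (mat n n' (\<lambda>(i, j). \<Sum>t<Suc m. f i t * g t j))
      \<le> vec_space.rank n (mat n n' (\<lambda>(i, j). \<Sum>t<m. f i t * g t j))
        + vec_space.rank n (mat n n' (\<lambda>(i, j). f i m * g m j))"
    unfolding split by (rule vec_space.rank_subadditive) auto
  ultimately show ?case using Suc by linarith
qed

lemma rank_mult_le_inner_dim:
  fixes M W :: "'a::field mat"
  assumes "M \<in> carrier_mat n k" "W \<in> carrier_mat k n'"
  shows "vec_space.rank n (M * W) \<le> k"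
proof -
  have "M * W = mat n n' (\<lambda>(i, j). \<Sum>t<k. M $$ (i, t) * W $$ (t, j))"
    using assms by (intro eq_matI) (auto simp: scalar_prod_def lessThan_atLeast0)
  then show ?thesis using rank_sum_of_rank_one_le[where n = n and n' = n' and m = k
      and f = "\<lambda>i t. M $$ (i, t)" and g = "\<lambda>t j. W $$ (t, j)"]
    by simp
qed

lemma (in vec_space) column_basis_factorization:
  assumes A: "A \<in> carrier_mat n nc"
  obtains J Q where "set J \<subseteq> {..<nc}" "length J = rank A"
    "distinct (map (col A) J)" "lin_indpt (set (map (col A) J))"
    "Q \<in> carrier_mat (rank A) nc" "A = mat_of_cols n (map (col A) J) * Q"
proof -
  obtain S where max: "maximal S (\<lambda>T. T \<subseteq> set (cols A) \<and> lin_indpt T)"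
    using maximal_exists[of "\<lambda>T. T \<subseteq> set (cols A) \<and> lin_indpt T" "card (set (cols A))" "{}"]
    by (meson List.finite_set card_mono empty_iff empty_subsetI finite_lin_indpt2 rev_finite_subset)
  have Ssub: "S \<subseteq> set (cols A)" and Sind: "lin_indpt S" using max unfolding maximal_def by auto
  have Scar: "S \<subseteq> carrier_vec n" using Ssub A cols_dim by blast
  obtain ss where ss: "distinct ss" "set ss = S"
    using finite_distinct_list[OF finite_subset[OF Ssub]] by blast
  have len: "length ss = rank A" using rank_card_indpt[OF A max] ss distinct_card by metis
  have "set (cols A) = col A ` {..<nc}" using A by (auto simp: cols_def)
  then have "\<forall>v \<in> set ss. \<exists>j<nc. v = col A j" using Ssub ss by auto
  then obtain idx where idx: "\<And>v. v \<in> set ss \<Longrightarrow> idx v < nc \<and> v = col A (idx v)" by metis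
  define J where "J = map idx ss"
  have colsJ: "map (col A) J = ss" unfolding J_def using idx by (simp add: map_idI)
  define P where "P = mat_of_cols n ss"
  have P: "P \<in> carrier_mat n (rank A)" unfolding P_def len[symmetric] by simp
  have colsP: "cols P = ss" unfolding P_def using Scar ss by simp
  have in_span: "col A c \<in> span S" if c: "c < nc" for c
  proof (cases "col A c \<in> S")
    case True then show ?thesis using span_mem[OF Scar] by simp
  next
    case False
    have cA: "col A c \<in> set (cols A)" using c A by (simp add: cols_def)
    have "lin_dep (S \<union> {col A c})"
      using max cA Ssub False unfolding maximal_def by blast
    then show ?thesis using lin_dep_iff_in_span[OF Scar Sind _ False] c A by simp
  qed
  have "\<forall>c<nc. \<exists>q \<in> carrier_vec (rank A). col A c = P *\<^sub>v q"
  proof (intro allI impI)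
    fix c assume c: "c < nc"
    obtain a where "lincomb a S = col A c"
      using finite_in_span[OF _ Scar in_span[OF c]] ss by auto
    then have "col A c = P *\<^sub>v vec (rank A) (\<lambda>i. a (col P i))"
      using mat_mult_eq_lincomb[OF P] colsP ss by simp
    then show "\<exists>q \<in> carrier_vec (rank A). col A c = P *\<^sub>v q" by auto
  qed
  then obtain q where q: "\<And>c. c < nc \<Longrightarrow> q c \<in> carrier_vec (rank A) \<and> col A c = P *\<^sub>v q c"
    by metis
  define Q where "Q = mat_of_cols (rank A) (map q [0..<nc])"
  have Q: "Q \<in> carrier_mat (rank A) nc" unfolding Q_def carrier_mat_def by simp
  have "A = P * Q"
    by (rule mat_col_eqI) (use A P Q q in \<open>auto simp: Q_def\<close>)
  show thesis
  proof
    show "set J \<subseteq> {..<nc}" unfolding J_def using idx by auto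
    show "length J = rank A" unfolding J_def using len by simp
    show "distinct (map (col A) J)" "lin_indpt (set (map (col A) J))" using colsJ ss Sind by auto
    show "A = mat_of_cols n (map (col A) J) * Q" using \<open>A = P * Q\<close> colsJ unfolding P_def by simp
  qed (rule Q)
qed

definition sel_mat :: "nat \<Rightarrow> nat list \<Rightarrow> 'a::{zero,one} mat" where
  "sel_mat n J = mat (length J) n (\<lambda>(t, i). if i = J ! t then 1 else 0)"

lemma mult_transpose_sel_mat:
  fixes A :: "'a::comm_ring_1 mat"
  assumes A: "A \<in> carrier_mat m n" and J: "set J \<subseteq> {..<n}"
  shows "A * transpose_mat (sel_mat n J) = mat_of_cols m (map (col A) J)"
proof (rule eq_matI)
  fix i t assume "i < dim_row (mat_of_cols m (map (col A) J))" "t < dim_col (mat_of_cols m (map (col A) J))"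
  then have it: "i < m" "t < length J" by auto
  then have "J ! t < n" using J nth_mem by blast
  then have "(A * transpose_mat (sel_mat n J)) $$ (i, t) = (\<Sum>j<n. A $$ (i, j) * (if j = J ! t then 1 else 0))"
    using A it by (simp add: sel_mat_def scalar_prod_def lessThan_atLeast0)
  also have "\<dots> = A $$ (i, J ! t)" using \<open>J ! t < n\<close> by (simp add: if_distrib cong: if_cong)
  finally show "(A * transpose_mat (sel_mat n J)) $$ (i, t) = mat_of_cols m (map (col A) J) $$ (i, t)"
    using A it \<open>J ! t < n\<close> by (simp add: mat_of_cols_def)
qed (use A in \<open>auto simp: sel_mat_def\<close>)

text \<open>Symmetric rank factorization A = Q^T D Q with D = A_JJ the principal submatrix on a
  column basis J.  With R the row selection for J and P = A R^T = A_J, symmetry gives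
  P^T = R A = R P Q = D Q, hence A = Q^T D Q and P = Q^T D; the latter shows that a kernel
  vector of D would be a linear dependence among the columns of P.\<close>
lemma symmetric_rank_factorization:
  fixes A :: "'a::field mat"
  assumes A: "A \<in> carrier_mat n n" and sym: "transpose_mat A = A"
  obtains Q D where "Q \<in> carrier_mat (vec_space.rank n A) n"
    "D \<in> carrier_mat (vec_space.rank n A) (vec_space.rank n A)"
    "transpose_mat D = D" "det D \<noteq> 0" "A = transpose_mat Q * D * Q"
proof -
  let ?r = "vec_space.rank n A"
  obtain J Q where J: "set J \<subseteq> {..<n}" "length J = ?r"
    and indpt: "distinct (map (col A) J)"
      "module.lin_indpt class_ring (module_vec TYPE('a) n) (set (map (col A) J))"
    and Q: "Q \<in> carrier_mat ?r n" and APQ: "A = mat_of_cols n (map (col A) J) * Q"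
    by (rule vec_space.column_basis_factorization[OF A])
  define R :: "'a mat" where "R = sel_mat n J"
  define P where "P = mat_of_cols n (map (col A) J)"
  define D where "D = R * P"
  have R: "R \<in> carrier_mat ?r n" unfolding R_def sel_mat_def J(2)[symmetric] by simp
  have P: "P \<in> carrier_mat n ?r" unfolding P_def J(2)[symmetric] carrier_mat_def by simp
  have D: "D \<in> carrier_mat ?r ?r" unfolding D_def using R P by simp
  have colsP: "cols P = map (col A) J" unfolding P_def using A by (intro cols_mat_of_cols) auto
  have APQ': "A = P * Q" using APQ unfolding P_def .
  have P_sel: "P = A * transpose_mat R" unfolding P_def R_def using mult_transpose_sel_mat[OF A J(1)] by simp
  have PtRA: "transpose_mat P = R * A" unfolding P_sel using A R by (simp add: transpose_mult sym)
  have Pt: "transpose_mat P = D * Q"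
  proof -
    have "transpose_mat P = R * (P * Q)" unfolding PtRA by (simp only: APQ')
    also have "\<dots> = D * Q" unfolding D_def using R P Q by simp
    finally show ?thesis .
  qed
  have Dsym: "transpose_mat D = D"
  proof -
    have "transpose_mat D = transpose_mat P * transpose_mat R" unfolding D_def by (rule transpose_mult[OF R P])
    also have "\<dots> = R * A * transpose_mat R" unfolding PtRA ..
    also have "\<dots> = D" unfolding D_def P_sel using R A by simp
    finally show ?thesis .
  qed
  have PQD: "P = transpose_mat Q * D"
    using arg_cong[OF Pt, of transpose_mat] D Q by (simp add: transpose_mult Dsym)
  have "A = transpose_mat Q * D * Q"
  proof -
    have "A = transpose_mat (P * Q)" using arg_cong[OF APQ', of transpose_mat] sym by simp
    also have "\<dots> = transpose_mat Q * (D * Q)" using P Q Pt by (simp add: transpose_mult)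
    finally show ?thesis using Q D by simp
  qed
  moreover have "det D \<noteq> 0"
  proof
    assume "det D = 0"
    then obtain v where v: "v \<in> carrier_vec ?r" "v \<noteq> 0\<^sub>v ?r" "D *\<^sub>v v = 0\<^sub>v ?r"
      using det_0_iff_vec_prod_zero_field[OF D] by blast
    have "P *\<^sub>v v = transpose_mat Q *\<^sub>v (D *\<^sub>v v)" unfolding PQD using Q D v by simp
    also have "\<dots> = 0\<^sub>v n" unfolding v(3) using Q by (intro eq_vecI) auto
    finally have "module.lin_dep class_ring (module_vec TYPE('a) n) (set (cols P))"
      using vec_space.lin_depI[OF P v(1,2)] colsP indpt(1) by simp
    then show False using colsP indpt(2) by simp
  qed
  ultimately show thesis using that Q D Dsym by blast
qed

text \<open>Padding: enlarging D to the block matrix diag(D, I) and Q by zero rows leaves the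
  congruence Q^T D Q unchanged and lets the middle factor have any size k \<ge> rank.\<close>
lemma congruence_padding:
  fixes Q D :: "'a::field mat"
  assumes Q: "Q \<in> carrier_mat r n" and D: "D \<in> carrier_mat r r" and Dsym: "transpose_mat D = D"
    and det: "det D \<noteq> 0" and rk: "r \<le> k"
  shows "\<exists>W B. W \<in> carrier_mat k n \<and> B \<in> carrier_mat k k \<and> transpose_mat B = B \<and>
    invertible_mat B \<and> transpose_mat W * B * W = transpose_mat Q * D * Q"
proof -
  define W where "W = four_block_mat Q (0\<^sub>m r 0) (0\<^sub>m (k - r) n) (0\<^sub>m (k - r) 0)"
  define B where "B = four_block_mat D (0\<^sub>m r (k - r)) (0\<^sub>m (k - r) r) (1\<^sub>m (k - r))"
  have W: "W \<in> carrier_mat k n" and B: "B \<in> carrier_mat k k" using Q D rk by (auto simp: W_def B_def)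
  have "det B = det D" unfolding B_def by (subst det_four_block_mat_lower_left_zero[OF D]) auto
  then have Binv: "invertible_mat B" using invertible_mat_if_det_nonzero[OF B] det by simp
  have Bsym: "transpose_mat B = B"
    unfolding B_def using D by (subst transpose_four_block_mat) (auto simp: Dsym)
  have Wt: "transpose_mat W = four_block_mat (transpose_mat Q) (0\<^sub>m n (k - r)) (0\<^sub>m 0 r) (0\<^sub>m 0 (k - r))"
    unfolding W_def using Q by (subst transpose_four_block_mat) auto
  have WtB: "transpose_mat W * B
      = four_block_mat (transpose_mat Q * D) (0\<^sub>m n (k - r)) (0\<^sub>m 0 r) (0\<^sub>m 0 (k - r))"
    unfolding Wt B_def by (subst mult_four_block_mat) (use Q D in auto)
  have "transpose_mat W * B * W
      = four_block_mat (transpose_mat Q * D * Q) (0\<^sub>m n 0) (0\<^sub>m 0 n) (0\<^sub>m 0 0)"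
    unfolding WtB unfolding W_def by (subst mult_four_block_mat) (use Q D in auto)
  also have "\<dots> = transpose_mat Q * D * Q" using Q D by (intro eq_matI) auto
  finally show ?thesis using W B Bsym Binv by blast
qed

lemma symmetric_low_rank_congruence:
  fixes A :: "'a::field mat"
  assumes A: "A \<in> carrier_mat n n" and sym: "transpose_mat A = A" and rk: "vec_space.rank n A \<le> k"
  shows "\<exists>W B. W \<in> carrier_mat k n \<and> B \<in> carrier_mat k k \<and> transpose_mat B = B \<and>
    invertible_mat B \<and> A = transpose_mat W * B * W"
proof -
  obtain Q D where "Q \<in> carrier_mat (vec_space.rank n A) n"
    "D \<in> carrier_mat (vec_space.rank n A) (vec_space.rank n A)"
    "transpose_mat D = D" "det D \<noteq> 0" "A = transpose_mat Q * D * Q"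
    by (rule symmetric_rank_factorization[OF A sym])
  with congruence_padding[OF this(1-4) rk] show ?thesis by metis
qed

lemma congruence_entry:
  fixes W B :: "'a::comm_ring_1 mat"
  assumes W: "W \<in> carrier_mat k n" and B: "B \<in> carrier_mat k k" and ij: "i < n" "j < n"
  shows "(transpose_mat W * B * W) $$ (i, j) = col W i \<bullet> (B *\<^sub>v col W j)"
proof -
  have assoc: "transpose_mat W * B * W = transpose_mat W * (B * W)"
    using W B by (intro assoc_mult_mat) auto
  have "(transpose_mat W * (B * W)) $$ (i, j) = row (transpose_mat W) i \<bullet> col (B * W) j"
    using W B ij by (intro index_mult_mat) auto
  moreover have "row (transpose_mat W) i = col W i" using W ij by simp
  moreover have "col (B * W) j = B *\<^sub>v col W j" by (rule col_mult2[OF B W ij(2)])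
  ultimately show ?thesis unfolding assoc by (simp only:)
qed

lemma congruence_symmetric:
  fixes W B :: "'a::comm_ring_1 mat"
  assumes W: "W \<in> carrier_mat k n" and B: "B \<in> carrier_mat k k" and sym: "transpose_mat B = B"
  shows "transpose_mat (transpose_mat W * B * W) = transpose_mat W * B * W"
proof -
  have inner: "transpose_mat (transpose_mat W * B) = B * W"
    using transpose_mult[of "transpose_mat W" n k B k] W B sym by simp
  have "transpose_mat (transpose_mat W * B * W) = transpose_mat W * transpose_mat (transpose_mat W * B)"
    using transpose_mult[of "transpose_mat W * B" n k W n] W B by simp
  then show ?thesis using W B inner by simp
qed

definition columns_along :: "'a::field mat \<Rightarrow> 'a vec list \<Rightarrow> (nat \<Rightarrow> nat) \<Rightarrow> bool" where
  "columns_along W xs f \<longleftrightarrow> (\<forall>x < dim_col W.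
     (f x = length xs \<and> col W x = 0\<^sub>v (dim_row W)) \<or>
     (f x < length xs \<and> (\<exists>c. c \<noteq> 0 \<and> col W x = c \<cdot>\<^sub>v xs ! f x)))"

lemma columns_along_exists:
  assumes reps: "proj_reps TYPE('a::field) k xs" and W: "W \<in> carrier_mat k n"
  shows "\<exists>f. columns_along W xs f"
proof -
  define ok where "ok x a \<longleftrightarrow> (a = length xs \<and> col W x = 0\<^sub>v k) \<or>
      (a < length xs \<and> (\<exists>c. c \<noteq> 0 \<and> col W x = c \<cdot>\<^sub>v xs ! a))" for x a
  have cover: "\<forall>v \<in> carrier_vec k. v \<noteq> 0\<^sub>v k \<longrightarrow> (\<exists>u \<in> set xs. \<exists>c. c \<noteq> 0 \<and> v = c \<cdot>\<^sub>v u)"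
    using reps unfolding proj_reps_def by (elim conjE)
  have ex: "\<exists>a. ok x a" for x
  proof (cases "col W x = 0\<^sub>v k")
    case True
    then show ?thesis unfolding ok_def by (intro exI[of _ "length xs"]) simp
  next
    case False
    have "col W x \<in> carrier_vec k" using col_dim[of W x] W by (metis carrier_matD(1))
    with cover False have "\<exists>u \<in> set xs. \<exists>c. c \<noteq> 0 \<and> col W x = c \<cdot>\<^sub>v u" by blast
    then obtain u c where u: "u \<in> set xs" "c \<noteq> 0" "col W x = c \<cdot>\<^sub>v u" by blast
    from u(1) obtain a where a: "a < length xs" "u = xs ! a" by (auto simp: in_set_conv_nth)
    show ?thesis unfolding ok_def
      by (intro exI[of _ a] disjI2 conjI a(1) exI[of _ c]) (use u a in simp_all)
  qed
  obtain f where f: "\<forall>x. ok x (f x)" using choice[of ok] ex by blast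
  have "dim_col W = n" "dim_row W = k" using W by auto
  then have "columns_along W xs f" using f unfolding columns_along_def ok_def by simp
  then show ?thesis by blast
qed

text \<open>Scaling a
  column by a nonzero constant scales the entry by a nonzero constant.\<close>
lemma congruence_pattern:
  fixes B W :: "'a::field mat"
  assumes W: "W \<in> carrier_mat k n" and B: "B \<in> carrier_mat k k"
    and xs: "set xs \<subseteq> carrier_vec k" and f: "columns_along W xs f" and xy: "x < n" "y < n"
  shows "(transpose_mat W * B * W) $$ (x, y) \<noteq> 0 \<longleftrightarrow>
    snd (add_K1 (Gamma (transpose_mat (mat_of_cols k xs) * B * mat_of_cols k xs))) (f x) (f y)"
proof -
  define U where "U = mat_of_cols k xs"
  define M where "M = transpose_mat U * B * U"
  have U: "U \<in> carrier_mat k (length xs)" unfolding U_def by simp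
  have colU: "col U a = xs ! a" if "a < length xs" for a
    unfolding U_def using that xs by (subst col_mat_of_cols) auto
  have dimM: "dim_row M = length xs" unfolding M_def using U B by simp
  have graph: "snd (add_K1 (Gamma M)) a b \<longleftrightarrow> a < length xs \<and> b < length xs \<and> M $$ (a, b) \<noteq> 0" for a b
    by (auto simp: add_K1_def Gamma_def dimM)
  have fx: "(f z = length xs \<and> col W z = 0\<^sub>v k) \<or> (f z < length xs \<and> (\<exists>c. c \<noteq> 0 \<and> col W z = c \<cdot>\<^sub>v xs ! f z))"
    if "z < n" for z
  proof -
    have "z < dim_col W" "dim_row W = k" using W that by auto
    with f show ?thesis unfolding columns_along_def by simp
  qed
  have Wcol: "col W z \<in> carrier_vec k" for z using col_dim[of W z] W by (metis carrier_matD(1))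
  have Bcol: "B *\<^sub>v col W z \<in> carrier_vec k" for z by (rule mult_mat_vec_carrier[OF B Wcol])
  have entry: "(transpose_mat W * B * W) $$ (x, y) = col W x \<bullet> (B *\<^sub>v col W y)"
    by (rule congruence_entry[OF W B xy])
  show ?thesis
  proof (cases "f x < length xs \<and> f y < length xs")
    case True
    obtain c where c: "c \<noteq> 0" "col W x = c \<cdot>\<^sub>v xs ! f x" using fx[OF xy(1)] True by auto
    obtain d where d: "d \<noteq> 0" "col W y = d \<cdot>\<^sub>v xs ! f y" using fx[OF xy(2)] True by auto
    have car: "xs ! f x \<in> carrier_vec k" "xs ! f y \<in> carrier_vec k" using True xs by auto
    have "M $$ (f x, f y) = xs ! f x \<bullet> (B *\<^sub>v xs ! f y)"
      using congruence_entry[OF U B True[THEN conjunct1] True[THEN conjunct2]] colU True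
      unfolding M_def by simp
    moreover have "col W x \<bullet> (B *\<^sub>v col W y) = c * d * (xs ! f x \<bullet> (B *\<^sub>v xs ! f y))"
      using c d car B by (simp add: mult_mat_vec[OF B])
    ultimately show ?thesis unfolding U_def[symmetric] M_def[symmetric] using entry graph True c d by simp
  next
    case False
    have B0: "B *\<^sub>v 0\<^sub>v k = 0\<^sub>v k" using B by (intro eq_vecI) auto
    have "col W x = 0\<^sub>v k \<or> col W y = 0\<^sub>v k" using fx xy False by auto
    then have "col W x \<bullet> (B *\<^sub>v col W y) = 0"
      using scalar_prod_left_zero[OF Bcol[of y]] scalar_prod_right_zero[OF Wcol[of x]] B0 by auto
    then show ?thesis unfolding U_def[symmetric] M_def[symmetric] using entry graph False by auto
  qed
qed

text \<open>Leading (first nonzero) coordinate of a vector; normalizing it to 1 picks a canonical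
  representative on each line through the origin.\<close>
definition lead_idx :: "'a::zero vec \<Rightarrow> nat" where
  "lead_idx v = (LEAST i. i < dim_vec v \<and> v $ i \<noteq> 0)"

lemma lead_idx:
  assumes "v \<in> carrier_vec k" "v \<noteq> 0\<^sub>v k"
  shows "lead_idx v < k" "v $ lead_idx v \<noteq> 0"
proof -
  have "\<exists>i. i < dim_vec v \<and> v $ i \<noteq> 0" using assms by (metis carrier_vecD eq_vecI index_zero_vec)
  from LeastI_ex[OF this] show "lead_idx v < k" "v $ lead_idx v \<noteq> 0"
    using assms(1) unfolding lead_idx_def by auto
qed

lemma lead_idx_smult:
  fixes v :: "'a::field vec"
  assumes "c \<noteq> 0"
  shows "lead_idx (c \<cdot>\<^sub>v v) = lead_idx v"
  unfolding lead_idx_def using assms by (intro arg_cong[where f = Least] ext) auto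

text \<open>Over a finite field, a list of representatives of the projective points of F^k exists:
  the nonzero vectors whose leading coordinate is 1.\<close>
lemma proj_reps_exist: "\<exists>xs. proj_reps TYPE('a::{field,finite}) k xs"
proof -
  define N :: "'a vec set" where "N = {u \<in> carrier_vec k. u \<noteq> 0\<^sub>v k \<and> u $ lead_idx u = 1}"
  have "finite N" unfolding N_def by (rule finite_subset[OF _ finite_carrier_vec]) auto
  then obtain xs where xs: "distinct xs" "set xs = N" using finite_distinct_list by blast
  have not_multiple: "xs ! j \<noteq> c \<cdot>\<^sub>v xs ! i"
    if ij: "i < length xs" "j < length xs" "i \<noteq> j" and c: "c \<noteq> 0" for i j c
  proof
    assume eq: "xs ! j = c \<cdot>\<^sub>v xs ! i"
    have u: "xs ! i \<in> N" and w: "xs ! j \<in> N" using ij xs nth_mem by blast+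
    let ?l = "lead_idx (xs ! i)"
    have "?l < k" using u lead_idx(1) unfolding N_def by blast
    then have "(xs ! j) $ ?l = c" using eq u unfolding N_def by auto
    moreover have "(xs ! j) $ ?l = 1" using w eq lead_idx_smult[OF c] unfolding N_def by auto
    ultimately have "xs ! j = xs ! i" using eq by simp
    then show False using ij xs(1) nth_eq_iff_index_eq by blast
  qed
  have covered: "\<exists>u \<in> set xs. \<exists>c. c \<noteq> 0 \<and> v = c \<cdot>\<^sub>v u"
    if v: "v \<in> carrier_vec k" "v \<noteq> 0\<^sub>v k" for v
  proof -
    define a where "a = v $ lead_idx v"
    have a: "a \<noteq> 0" "lead_idx v < k" using lead_idx[OF v] unfolding a_def by auto
    define u where "u = inverse a \<cdot>\<^sub>v v"
    have lead_u: "lead_idx u = lead_idx v" unfolding u_def using a(1) by (simp add: lead_idx_smult)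
    have u1: "u $ lead_idx u = 1" unfolding lead_u using a v(1) unfolding u_def a_def by simp
    have "u \<noteq> 0\<^sub>v k"
    proof
      assume "u = 0\<^sub>v k"
      then have "u $ lead_idx u = 0" using lead_u a(2) by simp
      with u1 show False by simp
    qed
    moreover have "u \<in> carrier_vec k" unfolding u_def using v(1) by simp
    moreover have "v = a \<cdot>\<^sub>v u" unfolding u_def using a(1) by (simp add: smult_smult_assoc)
    ultimately show ?thesis using u1 a(1) xs(2) unfolding N_def by blast
  qed
  have "proj_reps TYPE('a) k xs"
    unfolding proj_reps_def using xs not_multiple covered by (auto simp: N_def)
  then show ?thesis ..
qed

lemma looped_iso_refl: "looped_iso G G"
  unfolding looped_iso_def by (intro exI[of _ id]) simp

lemma blowup_add_K1_iso:
  assumes iso: "looped_iso G H" and bl: "is_blowup n E (add_K1 H)"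
  shows "is_blowup n E (add_K1 G)"
proof -
  obtain g where g: "bij_betw g {..<fst G} {..<fst H}"
    and adj: "\<And>i j. i < fst G \<Longrightarrow> j < fst G \<Longrightarrow> snd G i j \<longleftrightarrow> snd H (g i) (g j)"
    using iso unfolding looped_iso_def by blast
  obtain f where f: "\<And>x. x < n \<Longrightarrow> f x < Suc (fst H)"
    and E: "\<And>x y. x < n \<Longrightarrow> y < n \<Longrightarrow> x \<noteq> y \<Longrightarrow>
      E x y \<longleftrightarrow> f x < fst H \<and> f y < fst H \<and> snd H (f x) (f y)"
    using bl unfolding is_blowup_def add_K1_def by auto
  define h where "h a = (if a < fst H then the_inv_into {..<fst G} g a else fst G)" for a
  have h_in: "h a < fst G \<and> g (h a) = a" if "a < fst H" for a
    using that bij_betw_apply[OF bij_betw_the_inv_into[OF g]] f_the_inv_into_f_bij_betw[OF g]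
    unfolding h_def by auto
  have h_out: "h a = fst G" if "\<not> a < fst H" for a using that unfolding h_def by simp
  show ?thesis unfolding is_blowup_def add_K1_def fst_conv snd_conv
  proof (intro exI[of _ "h \<circ> f"] conjI allI impI)
    fix x assume "x < n"
    then show "(h \<circ> f) x < Suc (fst G)"
      using h_in[of "f x"] h_out[of "f x"] by (cases "f x < fst H") auto
  next
    fix x y assume xy: "x < n" "y < n" "x \<noteq> y"
    show "E x y \<longleftrightarrow> (h \<circ> f) x < fst G \<and> (h \<circ> f) y < fst G \<and> snd G ((h \<circ> f) x) ((h \<circ> f) y)"
      using E[OF xy] h_in h_out adj by (cases "f x < fst H"; cases "f y < fst H") auto
  qed
qed

text \<open>Sufficiency: a blowup of H \<union> K_1 with H \<in> g_k has a realization of rank at most k,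
  namely W^T B W where column x of W is the representative of the vertex of H hit by x (or
  zero for the vertex K_1).\<close>
lemma realization_from_blowup:
  assumes gk: "in_gk TYPE('a::field) k H" and bl: "is_blowup n E (add_K1 H)"
  shows "\<exists>A \<in> S_set TYPE('a) n E. mat_rank A \<le> k"
proof -
  obtain xs and B :: "'a mat" where reps: "proj_reps TYPE('a) k xs"
    and B: "B \<in> carrier_mat k k" and Bsym: "transpose_mat B = B"
    and iso: "looped_iso (Gamma (transpose_mat (mat_of_cols k xs) * B * mat_of_cols k xs)) H"
    using gk unfolding in_gk_def by blast
  let ?G = "Gamma (transpose_mat (mat_of_cols k xs) * B * mat_of_cols k xs)"
  have xs: "set xs \<subseteq> carrier_vec k" using reps unfolding proj_reps_def by auto
  have "is_blowup n E (add_K1 ?G)" by (rule blowup_add_K1_iso[OF iso bl])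
  moreover have "fst ?G = length xs" by (simp add: Gamma_def)
  ultimately obtain f where f: "\<And>x. x < n \<Longrightarrow> f x < Suc (length xs)"
    and E: "\<And>x y. x < n \<Longrightarrow> y < n \<Longrightarrow> x \<noteq> y \<Longrightarrow> E x y \<longleftrightarrow> snd (add_K1 ?G) (f x) (f y)"
    unfolding is_blowup_def add_K1_def by auto
  define W where "W = mat_of_cols k (map (\<lambda>x. if f x < length xs then xs ! f x else 0\<^sub>v k) [0..<n])"
  define A where "A = transpose_mat W * B * W"
  have W: "W \<in> carrier_mat k n" unfolding W_def carrier_mat_def by simp
  have colW: "col W x = (if f x < length xs then xs ! f x else 0\<^sub>v k)" if "x < n" for x
    unfolding W_def using that xs by (subst col_mat_of_cols) auto
  have "columns_along W xs f"
    unfolding columns_along_def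
  proof (intro allI impI)
    fix x assume "x < dim_col W"
    then have x: "x < n" using W by simp
    show "(f x = length xs \<and> col W x = 0\<^sub>v (dim_row W)) \<or>
        (f x < length xs \<and> (\<exists>c. c \<noteq> 0 \<and> col W x = c \<cdot>\<^sub>v xs ! f x))"
    proof (cases "f x < length xs")
      case True
      then show ?thesis using colW[OF x] by (intro disjI2 conjI exI[of _ 1]) simp_all
    next
      case False
      then show ?thesis using colW[OF x] f[OF x] W by simp
    qed
  qed
  then have pattern: "A $$ (x, y) \<noteq> 0 \<longleftrightarrow> E x y" if "x < n" "y < n" "x \<noteq> y" for x y
    using congruence_pattern[OF W B xs] E that unfolding A_def by blast
  have "A \<in> S_set TYPE('a) n E"
    unfolding S_set_def using W B pattern congruence_symmetric[OF W B Bsym] by (auto simp: A_def)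
  moreover have "mat_rank A \<le> k"
    unfolding mat_rank_def A_def using W B by (simp add: rank_mult_le_inner_dim[of _ n k _ n])
  ultimately show ?thesis by blast
qed

lemma blowup_from_realization:
  assumes A: "A \<in> S_set TYPE('a::{field,finite}) n E" and rk: "mat_rank A \<le> k"
  shows "\<exists>H. in_gk TYPE('a) k H \<and> is_blowup n E (add_K1 H)"
proof -
  have Acar: "A \<in> carrier_mat n n" and Asym: "transpose_mat A = A"
    and Aoff: "\<And>x y. x < n \<Longrightarrow> y < n \<Longrightarrow> x \<noteq> y \<Longrightarrow> A $$ (x, y) \<noteq> 0 \<longleftrightarrow> E x y"
    using A unfolding S_set_def by auto
  have "vec_space.rank n A \<le> k" using rk Acar unfolding mat_rank_def by simp
  then obtain W B where W: "W \<in> carrier_mat k n" and B: "B \<in> carrier_mat k k"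
    and Bsym: "transpose_mat B = B" and Binv: "invertible_mat B" and AWBW: "A = transpose_mat W * B * W"
    using symmetric_low_rank_congruence[OF Acar Asym] by blast
  obtain xs where reps: "proj_reps TYPE('a) k xs" using proj_reps_exist by blast
  have xs: "set xs \<subseteq> carrier_vec k" using reps unfolding proj_reps_def by auto
  obtain f where f: "columns_along W xs f" using columns_along_exists[OF reps W] by blast
  define H where "H = Gamma (transpose_mat (mat_of_cols k xs) * B * mat_of_cols k xs)"
  have "in_gk TYPE('a) k H"
    unfolding in_gk_def H_def using reps B Bsym Binv looped_iso_refl by blast
  moreover have "is_blowup n E (add_K1 H)"
    unfolding is_blowup_def
  proof (intro exI[of _ f] conjI allI impI)
    fix x assume "x < n"
    then show "f x < fst (add_K1 H)"
      using f W unfolding columns_along_def by (auto simp: add_K1_def H_def Gamma_def)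
  next
    fix x y assume xy: "x < n" "y < n" "x \<noteq> y"
    show "E x y \<longleftrightarrow> snd (add_K1 H) (f x) (f y)"
      using Aoff[OF xy] congruence_pattern[OF W B xs f xy(1,2)] unfolding AWBW H_def by blast
  qed
  ultimately show ?thesis by blast
qed

text \<open>For a simple graph, S(F, G) is nonempty: it contains the adjacency matrix.\<close>
lemma S_set_nonempty:
  assumes "simple_graph n E"
  shows "S_set TYPE('a::field) n E \<noteq> {}"
proof -
  have "mat n n (\<lambda>(i, j). if E i j then 1 else 0) \<in> S_set TYPE('a) n E"
    using assms unfolding S_set_def simple_graph_def by auto
  then show ?thesis by blast
qed

lemma mr_le_iff:
  assumes "S_set T n E \<noteq> {}"
  shows "mr T n E \<le> k \<longleftrightarrow> (\<exists>A \<in> S_set T n E. mat_rank A \<le> k)"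
proof -
  have ex: "\<exists>r. \<exists>A \<in> S_set T n E. mat_rank A = r" using assms by blast
  obtain A where A: "A \<in> S_set T n E" "mat_rank A = mr T n E"
    using LeastI_ex[OF ex] unfolding mr_def by blast
  have minimal: "mr T n E \<le> mat_rank A'" if "A' \<in> S_set T n E" for A'
    unfolding mr_def by (rule Least_le) (use that in blast)
  show ?thesis
  proof
    assume "mr T n E \<le> k"
    then show "\<exists>A \<in> S_set T n E. mat_rank A \<le> k" using A by (intro bexI[of _ A]) simp_all
  next
    assume "\<exists>A \<in> S_set T n E. mat_rank A \<le> k"
    then show "mr T n E \<le> k" using minimal order_trans by blast
  qed
qed

theorem mainTheorem1:
  fixes n k :: nat and E :: "nat \<Rightarrow> nat \<Rightarrow> bool"
  assumes "k \<ge> 1" and "simple_graph n E"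
  shows "mr TYPE('a::{field,finite}) n E \<le> k \<longleftrightarrow>
         (\<exists>H. in_gk TYPE('a) k H \<and> is_blowup n E (add_K1 H))"
proof -
  have "mr TYPE('a) n E \<le> k \<longleftrightarrow> (\<exists>A \<in> S_set TYPE('a) n E. mat_rank A \<le> k)"
    by (rule mr_le_iff[OF S_set_nonempty[OF assms(2)]])
  also have "\<dots> \<longleftrightarrow> (\<exists>H. in_gk TYPE('a) k H \<and> is_blowup n E (add_K1 H))"
  proof
    assume "\<exists>A \<in> S_set TYPE('a) n E. mat_rank A \<le> k"
    then obtain A where "A \<in> S_set TYPE('a) n E" "mat_rank A \<le> k" by blast
    then show "\<exists>H. in_gk TYPE('a) k H \<and> is_blowup n E (add_K1 H)" by (rule blowup_from_realization)
  next
    assume "\<exists>H. in_gk TYPE('a) k H \<and> is_blowup n E (add_K1 H)"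
    then obtain H where "in_gk TYPE('a) k H" "is_blowup n E (add_K1 H)" by blast
    then show "\<exists>A \<in> S_set TYPE('a) n E. mat_rank A \<le> k" by (rule realization_from_blowup)
  qed
  finally show ?thesis .
qed

end
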